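(* In the setting of the context, for all $u$ with $u_\infty<u\le u_0$, \[ \beta N-\beta\tilde S e^{(\beta/\gamma)\tilde R}u+\gamma\log u>\psi(u)>0 \] and \[ \beta N-\beta\tilde S e^{(\beta/\gamma)\tilde R}u+\gamma\log u>\beta\Bigl(\tilde E e^{-\delta\varphi(u)}+\tilde S e^{(\beta/\gamma)\tilde R}e^{-\delta\varphi(u)}\int_u^{u_0}e^{\delta\varphi(v)}dv\Bigr)>0 . \]
   Context: Let $\beta,\gamma,\delta>0$ be constants and $\tilde S,\tilde E,\tilde I,\tilde R$ real numbers with $N:=\tilde S+\tilde E+\tilde I+\tilde R>0$. Standing assumptions: (A1) $\tilde I>0$; (A2) $\tilde E>(\gamma/\delta)\tilde I$; (A3) $\tilde S>\delta\tilde E/(\beta\tilde I)$; (A4) $\tilde R\ge 0$ and $N>\tilde S e^{(\beta/\gamma)\tilde R}+\tilde R$. Let $\alpha$ be the unique solution in $(\tilde R,N)$ of $x=N-\tilde S e^{(\beta/\gamma)\tilde R}e^{-(\beta/\gamma)x}$, and assume (A5) $\tilde S<(\gamma/\beta)e^{(\beta/\gamma)(\alpha-\tilde R)}$. Put $u_0:=e^{-(\beta/\gamma)\tilde R}$, $u_\infty:=e^{-(\beta/\gamma)\alpha}$. Let $\psi$ be the unique function, continuous and positive on $(u_\infty,u_0]$ and $C^1$ on $(u_\infty,u_0)$, satisfying $\psi'(u)\psi(u)-\frac{\gamma+\delta}{u}\psi(u)=-\delta\,\frac{\beta N-\beta\tilde S e^{(\beta/\gamma)\tilde R}u+\gamma\log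 u}{u}$ on $(u_\infty,u_0)$ and $\psi(u_0)=\beta\tilde I$. Let $\varphi(u):=\int_u^{u_0}\frac{d\xi}{\xi\psi(\xi)}$ for $u\in(u_\infty,u_0]$. *)

theory Defs
  imports "HOL-Analysis.Analysis"
begin

definition seir_phi :: "(real \<Rightarrow> real) \<Rightarrow> real \<Rightarrow> real \<Rightarrow> real" where
  "seir_phi \<psi> u0 u = integral {u..u0} (\<lambda>\<xi>. 1 / (\<xi> * \<psi> \<xi>))"

end

theory Submission
  imports Defs
begin

text \<open>Write \<open>K = S e^{(\<beta>/\<gamma>)R}\<close>, \<open>F u = \<beta>N - \<beta>K u + \<gamma> ln u\<close> and \<open>\<Phi> = seir_phi \<psi> u0\<close>, so
  \<open>\<Phi>' = -1/(u \<psi>)\<close>. The ODE for \<open>\<psi>\<close> makes \<open>e^{\<delta>\<Phi>}(F - \<psi>)\<close> an antiderivative of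
  \<open>e^{\<delta>\<Phi>}(F' - \<gamma>/u) = -\<beta>K e^{\<delta>\<Phi>}\<close>. Integrating from \<open>u\<close> to \<open>u0\<close>, where \<open>\<Phi>\<close> vanishes
  and \<open>F - \<psi> = \<beta>E\<close>, gives
  \<open>F u - \<psi> u = \<beta> e^{-\<delta>\<Phi> u} (E + K \<integral>{u..u0} e^{\<delta>\<Phi>})\<close>,
  which is positive because \<open>E, S > 0\<close> by (A2) and (A3).\<close>

lemma seir_phi_self [simp]: "seir_phi \<psi> b b = 0"
  by (simp add: seir_phi_def)

lemma continuous_on_seir_phi_integrand:
  fixes \<psi> :: "real \<Rightarrow> real" and a b :: real
  assumes "0 < a" "continuous_on {a..b} \<psi>" "\<And>x. x \<in> {a..b} \<Longrightarrow> \<psi> x \<noteq> 0"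
  shows "continuous_on {a..b} (\<lambda>\<xi>. 1 / (\<xi> * \<psi> \<xi>))"
proof -
  have "x * \<psi> x \<noteq> 0" if "x \<in> {a..b}" for x
  proof -
    have "0 < x" "\<psi> x \<noteq> 0" using assms that by auto
    then show ?thesis by simp
  qed
  then show ?thesis
    by (intro continuous_intros assms(2)) auto
qed

lemma continuous_on_seir_phi:
  fixes \<psi> :: "real \<Rightarrow> real" and a b :: real
  assumes "0 < a" "continuous_on {a..b} \<psi>" "\<And>x. x \<in> {a..b} \<Longrightarrow> \<psi> x \<noteq> 0"
  shows "continuous_on {a..b} (seir_phi \<psi> b)"
  unfolding seir_phi_def
  by (intro indefinite_integral_continuous_1' integrable_continuous_interval
      continuous_on_seir_phi_integrand assms)

lemma seir_phi_has_real_derivative: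
  fixes \<psi> :: "real \<Rightarrow> real" and a b :: real
  assumes "0 < a" "continuous_on {a..b} \<psi>" "\<And>x. x \<in> {a..b} \<Longrightarrow> \<psi> x \<noteq> 0"
    and v: "v \<in> {a<..<b}"
  shows "(seir_phi \<psi> b has_real_derivative - 1 / (v * \<psi> v)) (at v)"
proof -
  have "(seir_phi \<psi> b has_real_derivative - 1 / (v * \<psi> v)) (at v within {a..b})"
    unfolding seir_phi_def
    using integral_has_real_derivative'[OF continuous_on_seir_phi_integrand[OF assms(1-3)]] v
    by simp
  moreover have "at v within {a..b} = at v"
    using v by (intro at_within_interior) simp
  ultimately show ?thesis by simp
qed

lemma integrating_factor_has_real_derivative:
  fixes \<Phi> F \<psi> :: "real \<Rightarrow> real"
  assumes "0 < v" "\<psi> v \<noteq> 0"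
    and \<Phi>: "(\<Phi> has_real_derivative - 1 / (v * \<psi> v)) (at v)"
    and F: "(F has_real_derivative F') (at v)"
    and \<psi>: "(\<psi> has_real_derivative \<psi>') (at v)"
    and ode: "\<psi>' * \<psi> v - (\<gamma> + \<delta>) / v * \<psi> v = - \<delta> * F v / v"
  shows "((\<lambda>x. exp (\<delta> * \<Phi> x) * (F x - \<psi> x)) has_real_derivative
           exp (\<delta> * \<Phi> v) * (F' - \<gamma> / v)) (at v)"
proof -
  have D: "((\<lambda>x. exp (\<delta> * \<Phi> x) * (F x - \<psi> x)) has_real_derivative
          exp (\<delta> * \<Phi> v) * (\<delta> * (- 1 / (v * \<psi> v))) * (F v - \<psi> v)
          + exp (\<delta> * \<Phi> v) * (F' - \<psi>')) (at v)"
    using DERIV_mult[OF DERIV_chain2[OF DERIV_exp DERIV_cmult[OF \<Phi>]] DERIV_diff[OF F \<psi>]]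
    by (simp add: mult.commute)
  have "\<delta> * (- 1 / (v * \<psi> v)) * (F v - \<psi> v) + (F' - \<psi>') = F' - \<gamma> / v"
    using ode \<open>0 < v\<close> \<open>\<psi> v \<noteq> 0\<close> by (simp add: field_simps)
  then have "exp (\<delta> * \<Phi> v) * (\<delta> * (- 1 / (v * \<psi> v))) * (F v - \<psi> v)
      + exp (\<delta> * \<Phi> v) * (F' - \<psi>') = exp (\<delta> * \<Phi> v) * (F' - \<gamma> / v)"
    by (metis distrib_left mult.assoc)
  with D show ?thesis by simp
qed

lemma integrating_factor_has_integral:
  fixes \<psi> \<psi>' F F' :: "real \<Rightarrow> real"
  assumes "0 < u" "u \<le> u0"
    and \<psi>_cont: "continuous_on {u..u0} \<psi>"
    and \<psi>_nz: "\<And>x. x \<in> {u..u0} \<Longrightarrow> \<psi> x \<noteq> 0"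
    and \<psi>_deriv: "\<And>v. v \<in> {u<..<u0} \<Longrightarrow> (\<psi> has_real_derivative \<psi>' v) (at v)"
    and F_cont: "continuous_on {u..u0} F"
    and F_deriv: "\<And>v. v \<in> {u<..<u0} \<Longrightarrow> (F has_real_derivative F' v) (at v)"
    and ode: "\<And>v. v \<in> {u<..<u0} \<Longrightarrow>
      \<psi>' v * \<psi> v - (\<gamma> + \<delta>) / v * \<psi> v = - \<delta> * F v / v"
  shows "((\<lambda>v. exp (\<delta> * seir_phi \<psi> u0 v) * (F' v - \<gamma> / v)) has_integral
           F u0 - \<psi> u0 - exp (\<delta> * seir_phi \<psi> u0 u) * (F u - \<psi> u)) {u..u0}"
proof -
  let ?W = "\<lambda>x. exp (\<delta> * seir_phi \<psi> u0 x) * (F x - \<psi> x)"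
  have "continuous_on {u..u0} ?W"
    by (intro continuous_intros continuous_on_seir_phi[OF \<open>0 < u\<close>] assms)
  moreover have "(?W has_real_derivative exp (\<delta> * seir_phi \<psi> u0 v) * (F' v - \<gamma> / v)) (at v)"
    if v: "v \<in> {u<..<u0}" for v
    using v \<open>0 < u\<close> \<psi>_nz
    by (intro integrating_factor_has_real_derivative[where \<psi>' = "\<psi>' v"] seir_phi_has_real_derivative[OF \<open>0 < u\<close>]
        \<psi>_cont F_deriv \<psi>_deriv ode) auto
  ultimately have "((\<lambda>v. exp (\<delta> * seir_phi \<psi> u0 v) * (F' v - \<gamma> / v)) has_integral ?W u0 - ?W u) {u..u0}"
    using \<open>u \<le> u0\<close>
    by (intro fundamental_theorem_of_calculus_interior)
      (auto simp: has_real_derivative_iff_has_vector_derivative)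
  then show ?thesis by simp
qed

lemma seir_force_minus_psi_eq:
  fixes \<beta> \<gamma> \<delta> S E I R N u u0 :: real and \<psi> \<psi>' :: "real \<Rightarrow> real"
  assumes "0 < u" "u \<le> u0" "0 < \<gamma>" "N = S + E + I + R" "u0 = exp (- (\<beta> / \<gamma>) * R)"
    and \<psi>_cont: "continuous_on {u..u0} \<psi>"
    and \<psi>_nz: "\<And>x. x \<in> {u..u0} \<Longrightarrow> \<psi> x \<noteq> 0"
    and \<psi>_deriv: "\<And>v. v \<in> {u<..<u0} \<Longrightarrow> (\<psi> has_real_derivative \<psi>' v) (at v)"
    and ode: "\<And>v. v \<in> {u<..<u0} \<Longrightarrow>
      \<psi>' v * \<psi> v - (\<gamma> + \<delta>) / v * \<psi> v
        = - \<delta> * (\<beta> * N - \<beta> * S * exp ((\<beta> / \<gamma>) * R) * v + \<gamma> * ln v) / v"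
    and init: "\<psi> u0 = \<beta> * I"
  shows "\<beta> * N - \<beta> * S * exp ((\<beta> / \<gamma>) * R) * u + \<gamma> * ln u - \<psi> u
    = \<beta> * (E * exp (- \<delta> * seir_phi \<psi> u0 u)
        + S * exp ((\<beta> / \<gamma>) * R) * exp (- \<delta> * seir_phi \<psi> u0 u)
            * integral {u..u0} (\<lambda>v. exp (\<delta> * seir_phi \<psi> u0 v)))"
proof -
  define K where "K = S * exp ((\<beta> / \<gamma>) * R)"
  define F where "F v = \<beta> * N - \<beta> * K * v + \<gamma> * ln v" for v
  define \<Phi> where "\<Phi> = seir_phi \<psi> u0"
  define J where "J = integral {u..u0} (\<lambda>v. exp (\<delta> * \<Phi> v))"
  have "((\<lambda>v. exp (\<delta> * \<Phi> v) * ((- \<beta> * K + \<gamma> / v) - \<gamma> / v)) has_integral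
          F u0 - \<psi> u0 - exp (\<delta> * \<Phi> u) * (F u - \<psi> u)) {u..u0}"
    unfolding \<Phi>_def
  proof (rule integrating_factor_has_integral[OF \<open>0 < u\<close> \<open>u \<le> u0\<close> \<psi>_cont \<psi>_nz \<psi>_deriv])
    show "continuous_on {u..u0} F"
      unfolding F_def using \<open>0 < u\<close> by (intro continuous_intros) auto
    show "(F has_real_derivative - \<beta> * K + \<gamma> / v) (at v)" if "v \<in> {u<..<u0}" for v
      unfolding F_def using that \<open>0 < u\<close> by (auto intro!: derivative_eq_intros)
    show "\<psi>' v * \<psi> v - (\<gamma> + \<delta>) / v * \<psi> v = - \<delta> * F v / v" if "v \<in> {u<..<u0}" for v
      using ode[OF that] unfolding F_def K_def by (simp add: mult.assoc)
  qed
  moreover have "F u0 = \<beta> * (E + I)"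
    unfolding F_def K_def \<open>u0 = _\<close> using assms(3,4)
    by (simp add: mult.assoc flip: exp_add) (simp add: algebra_simps)
  ultimately have "((\<lambda>v. - \<beta> * K * exp (\<delta> * \<Phi> v)) has_integral
      \<beta> * E - exp (\<delta> * \<Phi> u) * (F u - \<psi> u)) {u..u0}"
    using init by (simp add: algebra_simps)
  then have "- \<beta> * K * J = \<beta> * E - exp (\<delta> * \<Phi> u) * (F u - \<psi> u)"
    unfolding J_def by (metis integral_mult_right integral_unique)
  then have "F u - \<psi> u = \<beta> * (E * exp (- \<delta> * \<Phi> u) + K * exp (- \<delta> * \<Phi> u) * J)"
    by (simp add: exp_minus field_simps)
  then show ?thesis unfolding F_def K_def J_def \<Phi>_def by (simp add: mult.assoc)
qed

theorem proposition1:
  fixes \<beta> \<gamma> \<delta> S E I R N \<alpha> u0 uinf :: real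
    and \<psi> \<psi>' :: "real \<Rightarrow> real"
  assumes params: "\<beta> > 0" "\<gamma> > 0" "\<delta> > 0"
    and N_def: "N = S + E + I + R" and N_pos: "N > 0"
    and A1: "I > 0"
    and A2: "E > (\<gamma> / \<delta>) * I"
    and A3: "S > \<delta> * E / (\<beta> * I)"
    and A4: "R \<ge> 0" "N > S * exp ((\<beta> / \<gamma>) * R) + R"
    and alpha_in: "R < \<alpha>" "\<alpha> < N"
    and alpha_eq: "\<alpha> = N - S * exp ((\<beta> / \<gamma>) * R) * exp (- (\<beta> / \<gamma>) * \<alpha>)"
    and alpha_unique: "\<And>x. R < x \<Longrightarrow> x < N \<Longrightarrow>
                  x = N - S * exp ((\<beta> / \<gamma>) * R) * exp (- (\<beta> / \<gamma>) * x) \<Longrightarrow> x = \<alpha>"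
    and A5: "S < (\<gamma> / \<beta>) * exp ((\<beta> / \<gamma>) * (\<alpha> - R))"
    and u0_def: "u0 = exp (- (\<beta> / \<gamma>) * R)"
    and uinf_def: "uinf = exp (- (\<beta> / \<gamma>) * \<alpha>)"
    and psi_cont: "continuous_on {uinf<..u0} \<psi>"
    and psi_pos: "\<And>u. u \<in> {uinf<..u0} \<Longrightarrow> \<psi> u > 0"
    and psi_deriv: "\<And>u. u \<in> {uinf<..<u0} \<Longrightarrow> (\<psi> has_real_derivative \<psi>' u) (at u)"
    and psi'_cont: "continuous_on {uinf<..<u0} \<psi>'"
    and psi_ode: "\<And>u. u \<in> {uinf<..<u0} \<Longrightarrow>
        \<psi>' u * \<psi> u - (\<gamma> + \<delta>) / u * \<psi> u
          = - \<delta> * (\<beta> * N - \<beta> * S * exp ((\<beta> / \<gamma>) * R) * u + \<gamma> * ln u) / u"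
    and psi_init: "\<psi> u0 = \<beta> * I"
  shows "\<forall>u. uinf < u \<and> u \<le> u0 \<longrightarrow>
           (\<beta> * N - \<beta> * S * exp ((\<beta> / \<gamma>) * R) * u + \<gamma> * ln u > \<psi> u \<and> \<psi> u > 0) \<and>
           (\<beta> * N - \<beta> * S * exp ((\<beta> / \<gamma>) * R) * u + \<gamma> * ln u
              > \<beta> * (E * exp (- \<delta> * seir_phi \<psi> u0 u)
                     + S * exp ((\<beta> / \<gamma>) * R) * exp (- \<delta> * seir_phi \<psi> u0 u)
                         * integral {u..u0} (\<lambda>v. exp (\<delta> * seir_phi \<psi> u0 v))) \<and>
            \<beta> * (E * exp (- \<delta> * seir_phi \<psi> u0 u)
                     + S * exp ((\<beta> / \<gamma>) * R) * exp (- \<delta> * seir_phi \<psi> u0 u)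
                         * integral {u..u0} (\<lambda>v. exp (\<delta> * seir_phi \<psi> u0 v))) > 0)"
proof (intro allI impI)
  fix u assume u: "uinf < u \<and> u \<le> u0"
  have "0 < u" using u exp_gt_zero[of "- (\<beta> / \<gamma>) * \<alpha>"] unfolding uinf_def by linarith
  have "0 < E" using A1 A2 params by (smt (verit) divide_pos_pos mult_pos_pos)
  then have "0 < S" using A1 A3 params by (smt (verit) divide_pos_pos mult_pos_pos)
  have \<psi>_pos: "\<And>x. x \<in> {u..u0} \<Longrightarrow> 0 < \<psi> x" using psi_pos u by auto
  have \<psi>_cont: "continuous_on {u..u0} \<psi>" by (rule continuous_on_subset[OF psi_cont]) (use u in auto)
  have gap: "\<beta> * N - \<beta> * S * exp ((\<beta> / \<gamma>) * R) * u + \<gamma> * ln u - \<psi> u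
    = \<beta> * (E * exp (- \<delta> * seir_phi \<psi> u0 u)
        + S * exp ((\<beta> / \<gamma>) * R) * exp (- \<delta> * seir_phi \<psi> u0 u)
            * integral {u..u0} (\<lambda>v. exp (\<delta> * seir_phi \<psi> u0 v)))" (is "_ = ?G")
  proof (rule seir_force_minus_psi_eq[OF \<open>0 < u\<close> _ params(2) N_def u0_def \<psi>_cont _ _ _ psi_init])
    fix v assume "v \<in> {u<..<u0}"
    then have "v \<in> {uinf<..<u0}" using u by auto
    then show "(\<psi> has_real_derivative \<psi>' v) (at v)"
      and "\<psi>' v * \<psi> v - (\<gamma> + \<delta>) / v * \<psi> v
        = - \<delta> * (\<beta> * N - \<beta> * S * exp ((\<beta> / \<gamma>) * R) * v + \<gamma> * ln v) / v"
      by (rule psi_deriv, rule psi_ode)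
  qed (use u \<psi>_pos in force)+
  have "0 \<le> integral {u..u0} (\<lambda>v. exp (\<delta> * seir_phi \<psi> u0 v))"
    using \<open>0 < u\<close> \<psi>_cont \<psi>_pos
    by (intro integral_nonneg integrable_continuous_interval continuous_intros continuous_on_seir_phi)
      force+
  then have "0 < ?G"
    using params \<open>0 < E\<close> \<open>0 < S\<close> by (intro mult_pos_pos add_pos_nonneg mult_nonneg_nonneg) auto
  with gap \<psi>_pos[of u] u
  show "(\<beta> * N - \<beta> * S * exp ((\<beta> / \<gamma>) * R) * u + \<gamma> * ln u > \<psi> u \<and> \<psi> u > 0) \<and>
      (\<beta> * N - \<beta> * S * exp ((\<beta> / \<gamma>) * R) * u + \<gamma> * ln u > ?G \<and> ?G > 0)"
    by auto
qed

end
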